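(* Let $\epsilon\in\{0,\frac12\}$. Every 2-local automorphism of $\mathrm{SVir}[\epsilon]$ is an automorphism of $\mathrm{SVir}[\epsilon]$.
   Context: For $\epsilon\in\{0,\frac12\}$, the super Virasoro algebra $\mathrm{SVir}[\epsilon]$ is the Lie superalgebra over $\mathbb{C}$ with basis $\{L_m, G_r, C : m\in\mathbb{Z}, r\in\mathbb{Z}+\epsilon\}$, even part spanned by the $L_m$ and $C$, odd part spanned by the $G_r$, and brackets $[L_m,L_n]=(m-n)L_{m+n}+\frac{1}{12}\delta_{m+n,0}(m^3-m)C$, $[L_m,G_r]=(\frac m2-r)G_{m+r}$, $[G_r,G_s]=2L_{r+s}+\frac13\delta_{r+s,0}(r^2-\frac14)C$, with $C$ central. An automorphism is an even bijective linear map preserving the bracket. A map $\phi:L\to L$ (not assumed linear) is a 2-local automorphism if for all $x,y\in L$ there is an automorphism $\theta_{x,y}$ of $L$ with $\phi(x)=\theta_{x,y}(x)$ and $\phi(y)=\theta_{x,y}(y)$. *)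

theory Defs
  imports Complex_Main
begin

text \<open>Basis of the (ambient) super Virasoro algebra: L m, G r, C.  Indices are real
  numbers; the algebra SVir[eps] is the span of L m (m integer), G r (r - eps integer) and C.\<close>
datatype sbasis = L real | G real | C

text \<open>Elements are complex-valued coefficient functions on the basis (finitely supported,
  see svir_carrier).\<close>
type_synonym svir = "sbasis \<Rightarrow> complex"

fun bb :: "sbasis \<Rightarrow> sbasis \<Rightarrow> svir" where
  "bb (L m) (L n) = (\<lambda>w. (if w = L (m + n) then complex_of_real (m - n) else 0)
       + (if w = C \<and> m + n = 0 then complex_of_real ((m^3 - m) / 12) else 0))"
| "bb (L m) (G r) = (\<lambda>w. if w = G (m + r) then complex_of_real (m / 2 - r) else 0)"
| "bb (G r) (L m) = (\<lambda>w. if w = G (m + r) then - complex_of_real (m / 2 - r) else 0)"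
| "bb (G r) (G s) = (\<lambda>w. (if w = L (r + s) then 2 else 0)
       + (if w = C \<and> r + s = 0 then complex_of_real ((r^2 - 1/4) / 3) else 0))"
| "bb C _ = (\<lambda>w. 0)"
| "bb _ C = (\<lambda>w. 0)"

definition supp :: "svir \<Rightarrow> sbasis set" where
  "supp x = {u. x u \<noteq> 0}"

definition sbracket :: "svir \<Rightarrow> svir \<Rightarrow> svir" where
  "sbracket x y = (\<lambda>w. \<Sum>u\<in>supp x. \<Sum>v\<in>supp y. x u * y v * bb u v w)"

definition svir_carrier :: "real \<Rightarrow> svir set" where
  "svir_carrier eps = {x. finite (supp x)
      \<and> (\<forall>m. x (L m) \<noteq> 0 \<longrightarrow> m \<in> \<int>)
      \<and> (\<forall>r. x (G r) \<noteq> 0 \<longrightarrow> r - eps \<in> \<int>)}"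

definition svir_even :: "svir \<Rightarrow> bool" where
  "svir_even x \<longleftrightarrow> (\<forall>r. x (G r) = 0)"

definition svir_odd :: "svir \<Rightarrow> bool" where
  "svir_odd x \<longleftrightarrow> (\<forall>m. x (L m) = 0) \<and> x C = 0"

definition svir_aut :: "real \<Rightarrow> (svir \<Rightarrow> svir) \<Rightarrow> bool" where
  "svir_aut eps \<theta> \<longleftrightarrow>
     bij_betw \<theta> (svir_carrier eps) (svir_carrier eps)
   \<and> (\<forall>x\<in>svir_carrier eps. \<forall>y\<in>svir_carrier eps. \<theta> (\<lambda>u. x u + y u) = (\<lambda>u. \<theta> x u + \<theta> y u))
   \<and> (\<forall>c. \<forall>x\<in>svir_carrier eps. \<theta> (\<lambda>u. c * x u) = (\<lambda>u. c * \<theta> x u))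
   \<and> (\<forall>x\<in>svir_carrier eps. svir_even x \<longrightarrow> svir_even (\<theta> x))
   \<and> (\<forall>x\<in>svir_carrier eps. svir_odd x \<longrightarrow> svir_odd (\<theta> x))
   \<and> (\<forall>x\<in>svir_carrier eps. \<forall>y\<in>svir_carrier eps.
        \<theta> (sbracket x y) = sbracket (\<theta> x) (\<theta> y))"

definition svir_2local_aut :: "real \<Rightarrow> (svir \<Rightarrow> svir) \<Rightarrow> bool" where
  "svir_2local_aut eps \<phi> \<longleftrightarrow>
     (\<forall>x\<in>svir_carrier eps. \<forall>y\<in>svir_carrier eps.
        \<exists>\<theta>. svir_aut eps \<theta> \<and> \<phi> x = \<theta> x \<and> \<phi> y = \<theta> y)"

end

theory Submission
  imports Defs
begin

text \<open>An automorphism \<open>\<sigma>\<close> sends \<open>L\<^sub>0\<close> to \<open>\<plusminus>L\<^sub>0\<close>. Indeed \<open>ad \<sigma>(L\<^sub>0)\<close> is locally finite,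
  which excludes \<open>L\<close>-components of nonzero weight (an extreme one would generate unbounded weights);
  comparing weights in \<open>\<sigma>(L\<^sub>1)\<close> and in the preimage of \<open>L\<^sub>1\<close> forces the \<open>L\<^sub>0\<close>-coefficient to
  be \<open>\<plusminus>1\<close>, and \<open>[\<sigma>(L\<^sub>1), \<sigma>(L\<^sub>-\<^sub>1)]\<close> kills the central part. Hence \<open>\<sigma>\<close> maps every basis
  vector to a multiple of a basis vector of the same or opposite weight. If \<open>\<sigma>\<close> also fixes
  \<open>x = L\<^sub>1 + L\<^sub>2 + G\<^sub>\<epsilon>\<close>, the sign is \<open>+\<close>, the scalars on the \<open>L\<^sub>k\<close> are multiplicative and equal
  to 1 at \<open>k = 1, 2\<close>, hence always 1, and \<open>[G\<^sub>r, G\<^sub>s]\<close> and \<open>[L\<^sub>2, L\<^sub>-\<^sub>2]\<close> then fix the \<open>G\<^sub>r\<close> and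
  \<open>C\<close>: the stabilizer of \<open>x\<close> is trivial. Now if \<open>\<phi>\<close> is 2-local and \<open>\<tau>\<close> agrees with \<open>\<phi>\<close> at
  \<open>x\<close>, then for every \<open>y\<close> and every \<open>\<theta>\<close> agreeing with \<open>\<phi>\<close> at \<open>x\<close> and \<open>y\<close>, \<open>\<tau>\<^sup>-\<^sup>1\<theta>\<close> fixes \<open>x\<close>,
  so \<open>\<phi> y = \<theta> y = \<tau> y\<close>.\<close>

definition bvec :: "sbasis \<Rightarrow> svir" where
  "bvec a = (\<lambda>w. if w = a then 1 else 0)"

text \<open>The eigenvalue of a basis element under \<open>-ad L\<^sub>0\<close>.\<close>
fun weight :: "sbasis \<Rightarrow> real" where
  "weight (L m) = m" | "weight (G r) = r" | "weight C = 0"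

definition admissible :: "real \<Rightarrow> sbasis \<Rightarrow> bool" where
  "admissible eps b = (case b of L m \<Rightarrow> m \<in> \<int> | G r \<Rightarrow> r - eps \<in> \<int> | C \<Rightarrow> True)"

lemma admissible_simps [simp]:
  "admissible eps (L m) = (m \<in> \<int>)" "admissible eps (G r) = (r - eps \<in> \<int>)" "admissible eps C"
  by (auto simp: admissible_def)

lemma supp_bvec [simp]: "supp (bvec a) = {a}"
  by (auto simp: supp_def bvec_def)

lemma fun_eq_scaled_bvec:
  assumes "\<And>b. f b \<noteq> 0 \<Longrightarrow> b = p"
  shows "f = (\<lambda>b. f p * bvec p b)"
  unfolding fun_eq_iff bvec_def using assms by (metis mult.right_neutral mult_zero_right)

lemma expand_in_basis:
  assumes "finite S" "supp u \<subseteq> S"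
  shows "u = (\<lambda>w. \<Sum>b\<in>S. u b * bvec b w)"
proof
  fix w
  have "(\<Sum>b\<in>S. u b * bvec b w) = (if w \<in> S then u w else 0)"
    using assms(1) by (simp add: bvec_def if_distrib sum.delta' cong: if_cong)
  then show "u w = (\<Sum>b\<in>S. u b * bvec b w)"
    using assms(2) by (auto simp: supp_def)
qed

lemma sbracket_eq_sum:
  assumes "finite U" "supp x \<subseteq> U" "finite V" "supp y \<subseteq> V"
  shows "sbracket x y w = (\<Sum>u\<in>U. \<Sum>v\<in>V. x u * y v * bb u v w)"
proof -
  have "sbracket x y w = (\<Sum>u\<in>U. \<Sum>v\<in>supp y. x u * y v * bb u v w)"
    unfolding sbracket_def using assms by (intro sum.mono_neutral_left) (auto simp: supp_def)
  also have "\<dots> = (\<Sum>u\<in>U. \<Sum>v\<in>V. x u * y v * bb u v w)"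
    using assms by (intro sum.cong refl sum.mono_neutral_left) (auto simp: supp_def)
  finally show ?thesis .
qed

lemma sbracket_eq_zero:
  assumes "\<And>u v. x u * y v * bb u v w = 0"
  shows "sbracket x y w = 0"
  by (simp add: sbracket_def assms)

lemma sbracket_eq_single_term:
  assumes "finite (supp x)" "finite (supp y)"
    and "\<And>u v. (u, v) \<noteq> (u0, v0) \<Longrightarrow> x u * y v * bb u v w = 0"
  shows "sbracket x y w = x u0 * y v0 * bb u0 v0 w"
proof -
  let ?U = "insert u0 (supp x)" and ?V = "insert v0 (supp y)"
  have "sbracket x y w = (\<Sum>(u, v)\<in>?U \<times> ?V. x u * y v * bb u v w)"
    using assms(1,2) by (simp add: sbracket_eq_sum[of ?U x ?V y] sum.cartesian_product subset_insertI)
  also have "\<dots> = (\<Sum>(u, v)\<in>{(u0, v0)}. x u * y v * bb u v w)"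
    using assms by (intro sum.mono_neutral_right) (auto simp del: mult_eq_0_iff)
  finally show ?thesis by simp
qed

lemma sbracket_scaled_bvec:
  "sbracket (\<lambda>b. c * bvec a b) (\<lambda>b. d * bvec a' b) = (\<lambda>w. c * d * bb a a' w)"
proof
  fix w
  show "sbracket (\<lambda>b. c * bvec a b) (\<lambda>b. d * bvec a' b) w = c * d * bb a a' w"
    by (subst sbracket_eq_sum[where U = "{a}" and V = "{a'}"]) (auto simp: supp_def bvec_def)
qed

lemma sbracket_bvec: "sbracket (bvec a) (bvec a') = bb a a'"
  using sbracket_scaled_bvec[of 1 a 1 a'] by (simp add: bvec_def)

lemma bb_L0: "bb (L 0) v w = (if v = w then - of_real (weight v) else 0)"
  by (cases v) auto

lemma sbracket_L0_C:
  assumes "finite (supp y)"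
  shows "sbracket (\<lambda>b. \<alpha> * bvec (L 0) b + \<beta> * bvec C b) y = (\<lambda>w. - \<alpha> * of_real (weight w) * y w)"
proof
  fix w
  have "sbracket (\<lambda>b. \<alpha> * bvec (L 0) b + \<beta> * bvec C b) y w
      = (\<Sum>u\<in>{L 0, C}. \<Sum>v\<in>supp y. (\<alpha> * bvec (L 0) u + \<beta> * bvec C u) * y v * bb u v w)"
    using assms by (intro sbracket_eq_sum) (auto simp: supp_def bvec_def)
  also have "\<dots> = (\<Sum>v\<in>supp y. \<alpha> * y v * bb (L 0) v w)"
    by (simp add: bvec_def)
  also have "\<dots> = (\<Sum>v\<in>supp y. if v = w then - \<alpha> * of_real (weight w) * y w else 0)"
    by (intro sum.cong) (auto simp: bb_L0)
  also have "\<dots> = - \<alpha> * of_real (weight w) * y w"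
    using assms by (simp add: supp_def)
  finally show "sbracket (\<lambda>b. \<alpha> * bvec (L 0) b + \<beta> * bvec C b) y w = - \<alpha> * of_real (weight w) * y w" .
qed

lemma sbracket_L0:
  assumes "finite (supp y)"
  shows "sbracket (bvec (L 0)) y = (\<lambda>w. - of_real (weight w) * y w)"
  using sbracket_L0_C[OF assms, of 1 0] by (simp add: bvec_def)

lemma bb_L_coeff_nonzero:
  assumes "\<forall>r. u \<noteq> G r" "bb u v (L n) \<noteq> 0"
  obtains a b where "u = L a" "v = L b" "n = a + b"
  using assms by (cases u; cases v) (auto split: if_splits)

lemma supp_bb: "supp (bb u v) \<subseteq> {L (weight u + weight v), G (weight u + weight v), C}"
  by (cases u; cases v) (auto simp: supp_def split: if_splits)

lemma finite_supp_bb: "finite (supp (bb u v))"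
  using finite_subset[OF supp_bb] by blast

lemma supp_sbracket_subset: "supp (sbracket x y) \<subseteq> (\<Union>u\<in>supp x. \<Union>v\<in>supp y. supp (bb u v))"
proof
  fix w assume "w \<in> supp (sbracket x y)"
  then have "(\<Sum>u\<in>supp x. \<Sum>v\<in>supp y. x u * y v * bb u v w) \<noteq> 0"
    by (simp add: supp_def sbracket_def)
  then obtain u v where "u \<in> supp x" "v \<in> supp y" "x u * y v * bb u v w \<noteq> 0"
    by (meson sum.not_neutral_contains_not_neutral)
  then show "w \<in> (\<Union>u\<in>supp x. \<Union>v\<in>supp y. supp (bb u v))" by (auto simp: supp_def)
qed

lemma finite_supp_sbracket:
  "finite (supp x) \<Longrightarrow> finite (supp y) \<Longrightarrow> finite (supp (sbracket x y))"
  by (rule finite_subset[OF supp_sbracket_subset]) (auto intro: finite_supp_bb)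

lemma svir_carrier_iff:
  "x \<in> svir_carrier eps \<longleftrightarrow> finite (supp x) \<and> (\<forall>b\<in>supp x. admissible eps b)"
  unfolding svir_carrier_def supp_def by (auto simp: admissible_def split: sbasis.splits)

lemma carrier_finite_supp: "x \<in> svir_carrier eps \<Longrightarrow> finite (supp x)"
  by (simp add: svir_carrier_iff)

lemma carrier_admissible: "x \<in> svir_carrier eps \<Longrightarrow> x b \<noteq> 0 \<Longrightarrow> admissible eps b"
  by (simp add: svir_carrier_iff supp_def)

lemma carrier_subset:
  "x \<in> svir_carrier eps \<Longrightarrow> supp y \<subseteq> supp x \<Longrightarrow> y \<in> svir_carrier eps"
  unfolding svir_carrier_iff by (auto intro: finite_subset)

lemma bvec_in_carrier [simp]: "bvec b \<in> svir_carrier eps \<longleftrightarrow> admissible eps b"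
  by (simp add: svir_carrier_iff)

lemma add_in_carrier [intro]:
  assumes "x \<in> svir_carrier eps" "y \<in> svir_carrier eps"
  shows "(\<lambda>u. x u + y u) \<in> svir_carrier eps"
proof -
  have "supp (\<lambda>u. x u + y u) \<subseteq> supp x \<union> supp y" by (auto simp: supp_def)
  with assms show ?thesis unfolding svir_carrier_iff by (meson Un_iff finite_UnI finite_subset subsetD)
qed

lemma smult_in_carrier [intro]: "x \<in> svir_carrier eps \<Longrightarrow> (\<lambda>u. c * x u) \<in> svir_carrier eps"
  by (erule carrier_subset) (auto simp: supp_def)

lemma sum_in_carrier:
  assumes "finite S" "\<forall>b\<in>S. f b \<in> svir_carrier eps"
  shows "(\<lambda>w. \<Sum>b\<in>S. c b * f b w) \<in> svir_carrier eps"
  using assms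
proof (induction S rule: finite_induct)
  case empty
  then show ?case by (simp add: svir_carrier_iff supp_def)
next
  case (insert a S)
  then have "(\<lambda>u. (\<lambda>u. c a * f a u) u + (\<lambda>w. \<Sum>b\<in>S. c b * f b w) u) \<in> svir_carrier eps"
    by (intro add_in_carrier smult_in_carrier) auto
  then show ?case using insert by simp
qed

lemma Ints_sum_of_admissible_G:
  fixes eps :: real
  assumes "eps = 0 \<or> eps = 1/2" "r - eps \<in> \<int>" "s - eps \<in> \<int>"
  shows "r + s \<in> \<int>"
proof -
  have "2 * eps = 0 \<or> 2 * eps = 1" using assms(1) by auto
  then have "2 * eps \<in> \<int>" by (metis Ints_0 Ints_1)
  then have "(r - eps) + (s - eps) + 2 * eps \<in> \<int>" using assms(2,3) by (intro Ints_add)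
  then show ?thesis by simp
qed

lemma admissible_supp_bb:
  fixes eps :: real
  assumes eps: "eps = 0 \<or> eps = 1/2"
    and u: "admissible eps u" and v: "admissible eps v" and w: "w \<in> supp (bb u v)"
  shows "admissible eps w"
proof (cases u; cases v)
  fix m n assume "u = L m" "v = L n"
  then show ?thesis using u v w by (auto simp: supp_def split: if_splits)
next
  fix m r assume uv: "u = L m" "v = G r"
  then have "m + (r - eps) \<in> \<int>" using u v by (simp add: Ints_add)
  moreover have "w = G (m + r)" using w uv by (simp add: supp_def split: if_splits)
  ultimately show ?thesis by (simp add: add_diff_eq)
next
  fix r m assume uv: "u = G r" "v = L m"
  then have "m + (r - eps) \<in> \<int>" using u v by (simp add: Ints_add)
  moreover have "w = G (m + r)" using w uv by (simp add: supp_def split: if_splits)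
  ultimately show ?thesis by (simp add: add_diff_eq)
next
  fix r s assume uv: "u = G r" "v = G s"
  then have "r + s \<in> \<int>" using u v Ints_sum_of_admissible_G[OF eps] by simp
  moreover have "w = L (r + s) \<or> w = C" using w uv by (simp add: supp_def split: if_splits)
  ultimately show ?thesis by auto
qed (use w in \<open>simp_all add: supp_def\<close>)

lemma sbracket_in_carrier [intro]:
  assumes "eps = 0 \<or> eps = 1/2" "x \<in> svir_carrier eps" "y \<in> svir_carrier eps"
  shows "sbracket x y \<in> svir_carrier eps"
  unfolding svir_carrier_iff
proof
  show "finite (supp (sbracket x y))"
    using assms by (intro finite_supp_sbracket) (auto simp: svir_carrier_iff)
  show "\<forall>b\<in>supp (sbracket x y). admissible eps b"
  proof
    fix b assume "b \<in> supp (sbracket x y)"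
    then obtain u v where "u \<in> supp x" "v \<in> supp y" "b \<in> supp (bb u v)"
      using supp_sbracket_subset by blast
    then show "admissible eps b"
      using assms admissible_supp_bb[OF assms(1)] by (meson svir_carrier_iff)
  qed
qed

lemma zero_in_carrier [simp]: "(\<lambda>w. 0) \<in> svir_carrier eps"
  by (simp add: svir_carrier_iff supp_def)

definition even_part :: "svir \<Rightarrow> svir" where
  "even_part z = (\<lambda>b. case b of G r \<Rightarrow> 0 | _ \<Rightarrow> z b)"

definition odd_part :: "svir \<Rightarrow> svir" where
  "odd_part z = (\<lambda>b. case b of G r \<Rightarrow> z b | _ \<Rightarrow> 0)"

lemma even_part_in_carrier: "z \<in> svir_carrier eps \<Longrightarrow> even_part z \<in> svir_carrier eps"
proof (erule carrier_subset)
  have "even_part z b \<noteq> 0 \<Longrightarrow> z b \<noteq> 0" for b by (cases b) (auto simp: even_part_def)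
  then show "supp (even_part z) \<subseteq> supp z" by (auto simp: supp_def)
qed

lemma odd_part_in_carrier: "z \<in> svir_carrier eps \<Longrightarrow> odd_part z \<in> svir_carrier eps"
proof (erule carrier_subset)
  have "odd_part z b \<noteq> 0 \<Longrightarrow> z b \<noteq> 0" for b by (cases b) (auto simp: odd_part_def)
  then show "supp (odd_part z) \<subseteq> supp z" by (auto simp: supp_def)
qed

lemma even_plus_odd_part: "z = (\<lambda>u. even_part z u + odd_part z u)"
  by (auto simp: even_part_def odd_part_def split: sbasis.splits)

lemma svir_even_even_part: "svir_even (even_part z)"
  and svir_odd_odd_part: "svir_odd (odd_part z)"
  by (auto simp: even_part_def odd_part_def svir_even_def svir_odd_def)

lemma svir_even_iff_odd_part_zero: "svir_even z \<longleftrightarrow> odd_part z = (\<lambda>w. 0)"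
proof
  assume "odd_part z = (\<lambda>w. 0)"
  then have "odd_part z (G r) = 0" for r by simp
  then show "svir_even z" by (simp add: svir_even_def odd_part_def)
qed (auto simp: svir_even_def odd_part_def fun_eq_iff split: sbasis.splits)

lemma svir_odd_iff_even_part_zero: "svir_odd z \<longleftrightarrow> even_part z = (\<lambda>w. 0)"
proof
  assume "even_part z = (\<lambda>w. 0)"
  then have "even_part z (L m) = 0" "even_part z C = 0" for m by simp_all
  then show "svir_odd z" by (simp add: svir_odd_def even_part_def)
qed (auto simp: svir_odd_def even_part_def fun_eq_iff split: sbasis.splits)

lemma parts_of_even_plus_odd:
  assumes "svir_even a" "svir_odd b"
  shows "even_part (\<lambda>u. a u + b u) = a" "odd_part (\<lambda>u. a u + b u) = b"
  using assms by (auto simp: svir_even_def svir_odd_def even_part_def odd_part_def fun_eq_iff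
      split: sbasis.splits)

locale svir_automorphism =
  fixes eps :: real and \<sigma> :: "svir \<Rightarrow> svir"
  assumes aut: "svir_aut eps \<sigma>"
begin

lemma bij: "bij_betw \<sigma> (svir_carrier eps) (svir_carrier eps)"
  using aut unfolding svir_aut_def by blast

lemma maps_carrier [intro]: "x \<in> svir_carrier eps \<Longrightarrow> \<sigma> x \<in> svir_carrier eps"
  using bij bij_betwE by blast

lemma inj_on_carrier:
  "x \<in> svir_carrier eps \<Longrightarrow> y \<in> svir_carrier eps \<Longrightarrow> \<sigma> x = \<sigma> y \<Longrightarrow> x = y"
  using bij unfolding bij_betw_def inj_on_def by blast

lemma surj_on_carrier:
  assumes "z \<in> svir_carrier eps"
  obtains x where "x \<in> svir_carrier eps" "\<sigma> x = z"
proof -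
  have "z \<in> \<sigma> ` svir_carrier eps" using assms bij by (simp add: bij_betw_def)
  then show ?thesis using that by blast
qed

lemma map_add:
  "x \<in> svir_carrier eps \<Longrightarrow> y \<in> svir_carrier eps \<Longrightarrow> \<sigma> (\<lambda>u. x u + y u) = (\<lambda>u. \<sigma> x u + \<sigma> y u)"
  using aut unfolding svir_aut_def by blast

lemma map_smult: "x \<in> svir_carrier eps \<Longrightarrow> \<sigma> (\<lambda>u. c * x u) = (\<lambda>u. c * \<sigma> x u)"
  using aut unfolding svir_aut_def by blast

lemma preserves_even: "x \<in> svir_carrier eps \<Longrightarrow> svir_even x \<Longrightarrow> svir_even (\<sigma> x)"
  using aut unfolding svir_aut_def by blast

lemma preserves_odd: "x \<in> svir_carrier eps \<Longrightarrow> svir_odd x \<Longrightarrow> svir_odd (\<sigma> x)"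
  using aut unfolding svir_aut_def by blast

lemma map_bracket:
  "x \<in> svir_carrier eps \<Longrightarrow> y \<in> svir_carrier eps \<Longrightarrow> \<sigma> (sbracket x y) = sbracket (\<sigma> x) (\<sigma> y)"
  using aut unfolding svir_aut_def by blast

lemma map_zero: "\<sigma> (\<lambda>w. 0) = (\<lambda>w. 0)"
  using map_smult[OF zero_in_carrier, of 0] by simp

lemma map_eq_zero_iff: "x \<in> svir_carrier eps \<Longrightarrow> \<sigma> x = (\<lambda>w. 0) \<longleftrightarrow> x = (\<lambda>w. 0)"
  using inj_on_carrier[OF _ zero_in_carrier, of x] map_zero by auto

lemma map_sum:
  assumes "finite S" "\<forall>b\<in>S. f b \<in> svir_carrier eps"
  shows "\<sigma> (\<lambda>w. \<Sum>b\<in>S. c b * f b w) = (\<lambda>w. \<Sum>b\<in>S. c b * \<sigma> (f b) w)"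
  using assms
proof (induction S rule: finite_induct)
  case empty
  then show ?case using map_zero by simp
next
  case (insert a S)
  have rest: "(\<lambda>w. \<Sum>b\<in>S. c b * f b w) \<in> svir_carrier eps"
    using insert by (intro sum_in_carrier) auto
  have fa: "f a \<in> svir_carrier eps" using insert by auto
  have "(\<lambda>w. \<Sum>b\<in>insert a S. c b * f b w) = (\<lambda>u. (\<lambda>u. c a * f a u) u + (\<lambda>w. \<Sum>b\<in>S. c b * f b w) u)"
    using insert by simp
  then have "\<sigma> (\<lambda>w. \<Sum>b\<in>insert a S. c b * f b w)
      = (\<lambda>u. \<sigma> (\<lambda>u. c a * f a u) u + \<sigma> (\<lambda>w. \<Sum>b\<in>S. c b * f b w) u)"
    using map_add[OF smult_in_carrier[OF fa] rest] by simp
  also have "\<dots> = (\<lambda>u. c a * \<sigma> (f a) u + (\<Sum>b\<in>S. c b * \<sigma> (f b) u))"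
    using map_smult[OF fa] insert by simp
  also have "\<dots> = (\<lambda>w. \<Sum>b\<in>insert a S. c b * \<sigma> (f b) w)"
    using insert by simp
  finally show ?case .
qed

lemma map_in_basis:
  assumes "u \<in> svir_carrier eps" "finite S" "supp u \<subseteq> S" "\<forall>b\<in>S. admissible eps b"
  shows "\<sigma> u = (\<lambda>w. \<Sum>b\<in>S. u b * \<sigma> (bvec b) w)"
proof -
  have "\<sigma> u = \<sigma> (\<lambda>w. \<Sum>b\<in>S. u b * bvec b w)"
    using arg_cong[OF expand_in_basis[OF assms(2,3)], of \<sigma>] .
  also have "\<dots> = (\<lambda>w. \<Sum>b\<in>S. u b * \<sigma> (bvec b) w)" using assms by (intro map_sum) auto
  finally show ?thesis .
qed

lemma supp_map_subset:
  assumes "u \<in> svir_carrier eps" "finite S" "supp u \<subseteq> S" "\<forall>b\<in>S. admissible eps b"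
  shows "supp (\<sigma> u) \<subseteq> (\<Union>b\<in>S. supp (\<sigma> (bvec b)))"
proof
  fix w assume "w \<in> supp (\<sigma> u)"
  then have "(\<Sum>b\<in>S. u b * \<sigma> (bvec b) w) \<noteq> 0" using map_in_basis[OF assms] by (simp add: supp_def)
  then obtain b where "b \<in> S" "u b * \<sigma> (bvec b) w \<noteq> 0" by (meson sum.not_neutral_contains_not_neutral)
  then show "w \<in> (\<Union>b\<in>S. supp (\<sigma> (bvec b)))" by (auto simp: supp_def)
qed

lemma map_parts:
  assumes "z \<in> svir_carrier eps"
  shows "\<sigma> (even_part z) = even_part (\<sigma> z)" "\<sigma> (odd_part z) = odd_part (\<sigma> z)"
proof -
  have ev: "even_part z \<in> svir_carrier eps" and od: "odd_part z \<in> svir_carrier eps"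
    using assms by (simp_all add: even_part_in_carrier odd_part_in_carrier)
  have "\<sigma> z = (\<lambda>u. \<sigma> (even_part z) u + \<sigma> (odd_part z) u)"
    using map_add[OF ev od] even_plus_odd_part[of z] by simp
  moreover have "svir_even (\<sigma> (even_part z))" "svir_odd (\<sigma> (odd_part z))"
    using ev od by (simp_all add: preserves_even preserves_odd svir_even_even_part svir_odd_odd_part)
  ultimately show "\<sigma> (even_part z) = even_part (\<sigma> z)" "\<sigma> (odd_part z) = odd_part (\<sigma> z)"
    by (simp_all add: parts_of_even_plus_odd)
qed

lemma reflects_even: "z \<in> svir_carrier eps \<Longrightarrow> svir_even (\<sigma> z) \<Longrightarrow> svir_even z"
  by (simp add: svir_even_iff_odd_part_zero map_parts(2)[symmetric] map_eq_zero_iff odd_part_in_carrier)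

lemma reflects_odd: "z \<in> svir_carrier eps \<Longrightarrow> svir_odd (\<sigma> z) \<Longrightarrow> svir_odd z"
  by (simp add: svir_odd_iff_even_part_zero map_parts(1)[symmetric] map_eq_zero_iff even_part_in_carrier)

end

lemma svir_aut_inv_into:
  assumes eps: "eps = 0 \<or> eps = 1/2" and aut: "svir_aut eps \<sigma>"
  shows "svir_aut eps (inv_into (svir_carrier eps) \<sigma>)"
proof -
  interpret svir_automorphism eps \<sigma> using aut by unfold_locales
  let ?K = "svir_carrier eps" and ?\<iota> = "inv_into (svir_carrier eps) \<sigma>"
  have bij_inv: "bij_betw ?\<iota> ?K ?K" using bij by (rule bij_betw_inv_into)
  have inv_in: "?\<iota> x \<in> ?K" if "x \<in> ?K" for x using bij_inv bij_betwE that by blast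
  have right_inv: "\<sigma> (?\<iota> x) = x" if "x \<in> ?K" for x
    using bij_betw_inv_into_right[OF bij that] .
  have inv_eqI: "?\<iota> x = y" if "x \<in> ?K" "y \<in> ?K" "\<sigma> y = x" for x y
    using inj_on_carrier[OF inv_in[OF that(1)] that(2)] right_inv that by simp
  show ?thesis unfolding svir_aut_def
  proof (intro conjI ballI allI impI bij_inv)
    fix x y assume x: "x \<in> ?K" and y: "y \<in> ?K"
    show "?\<iota> (\<lambda>u. x u + y u) = (\<lambda>u. ?\<iota> x u + ?\<iota> y u)"
      using map_add[OF inv_in[OF x] inv_in[OF y]] add_in_carrier[OF inv_in[OF x] inv_in[OF y]] x y
      by (intro inv_eqI) (auto simp: right_inv)
    show "?\<iota> (sbracket x y) = sbracket (?\<iota> x) (?\<iota> y)"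
      using map_bracket[OF inv_in[OF x] inv_in[OF y]] sbracket_in_carrier[OF eps inv_in[OF x] inv_in[OF y]] x y eps
      by (intro inv_eqI) (auto simp: right_inv)
  next
    fix c x assume x: "x \<in> ?K"
    show "?\<iota> (\<lambda>u. c * x u) = (\<lambda>u. c * ?\<iota> x u)"
      using map_smult[OF inv_in[OF x]] smult_in_carrier[OF inv_in[OF x]] x by (intro inv_eqI) (auto simp: right_inv)
  next
    fix x assume x: "x \<in> ?K"
    show "svir_even (?\<iota> x)" if "svir_even x"
      using reflects_even[OF inv_in[OF x]] that x by (simp add: right_inv)
    show "svir_odd (?\<iota> x)" if "svir_odd x"
      using reflects_odd[OF inv_in[OF x]] that x by (simp add: right_inv)
  qed
qed

lemma svir_aut_comp:
  assumes "svir_aut eps \<sigma>" "svir_aut eps \<tau>"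
  shows "svir_aut eps (\<lambda>x. \<sigma> (\<tau> x))"
  unfolding svir_aut_def
proof (intro conjI ballI allI impI)
  interpret s: svir_automorphism eps \<sigma> using assms(1) by unfold_locales
  interpret t: svir_automorphism eps \<tau> using assms(2) by unfold_locales
  show "bij_betw (\<lambda>x. \<sigma> (\<tau> x)) (svir_carrier eps) (svir_carrier eps)"
    using bij_betw_trans[OF t.bij s.bij] by (simp add: comp_def)
  fix x y assume x: "x \<in> svir_carrier eps" and y: "y \<in> svir_carrier eps"
  show "\<sigma> (\<tau> (\<lambda>u. x u + y u)) = (\<lambda>u. \<sigma> (\<tau> x) u + \<sigma> (\<tau> y) u)"
    using t.map_add[OF x y] s.map_add[OF t.maps_carrier[OF x] t.maps_carrier[OF y]] by simp
  show "\<sigma> (\<tau> (sbracket x y)) = sbracket (\<sigma> (\<tau> x)) (\<sigma> (\<tau> y))"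
    using t.map_bracket[OF x y] s.map_bracket[OF t.maps_carrier[OF x] t.maps_carrier[OF y]] by simp
next
  interpret s: svir_automorphism eps \<sigma> using assms(1) by unfold_locales
  interpret t: svir_automorphism eps \<tau> using assms(2) by unfold_locales
  fix c x assume x: "x \<in> svir_carrier eps"
  show "\<sigma> (\<tau> (\<lambda>u. c * x u)) = (\<lambda>u. c * \<sigma> (\<tau> x) u)"
    using t.map_smult[OF x] s.map_smult[OF t.maps_carrier[OF x]] by simp
  show "svir_even (\<sigma> (\<tau> x))" if "svir_even x"
    using that t.preserves_even[OF x] s.preserves_even[OF t.maps_carrier[OF x]] by simp
  show "svir_odd (\<sigma> (\<tau> x))" if "svir_odd x"
    using that t.preserves_odd[OF x] s.preserves_odd[OF t.maps_carrier[OF x]] by simp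
qed

lemma svir_aut_cong:
  assumes eps: "eps = 0 \<or> eps = 1/2" and aut: "svir_aut eps \<tau>"
    and eq: "\<forall>y\<in>svir_carrier eps. \<phi> y = \<tau> y"
  shows "svir_aut eps \<phi>"
  unfolding svir_aut_def
proof (intro conjI ballI allI impI)
  interpret svir_automorphism eps \<tau> using aut by unfold_locales
  have eqI: "\<phi> y = \<tau> y" if "y \<in> svir_carrier eps" for y using eq that by blast
  show "bij_betw \<phi> (svir_carrier eps) (svir_carrier eps)"
    using bij eqI bij_betw_cong by metis
  fix x y assume x: "x \<in> svir_carrier eps" and y: "y \<in> svir_carrier eps"
  show "\<phi> (\<lambda>u. x u + y u) = (\<lambda>u. \<phi> x u + \<phi> y u)"
    unfolding eqI[OF x] eqI[OF y] eqI[OF add_in_carrier[OF x y]] by (rule map_add[OF x y])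
  show "\<phi> (sbracket x y) = sbracket (\<phi> x) (\<phi> y)"
    unfolding eqI[OF x] eqI[OF y] eqI[OF sbracket_in_carrier[OF eps x y]] by (rule map_bracket[OF x y])
next
  interpret svir_automorphism eps \<tau> using aut by unfold_locales
  have eqI: "\<phi> y = \<tau> y" if "y \<in> svir_carrier eps" for y using eq that by blast
  fix c x assume x: "x \<in> svir_carrier eps"
  show "\<phi> (\<lambda>u. c * x u) = (\<lambda>u. c * \<phi> x u)"
    unfolding eqI[OF x] eqI[OF smult_in_carrier[OF x]] by (rule map_smult[OF x])
  show "svir_even (\<phi> x)" if "svir_even x" unfolding eqI[OF x] using preserves_even[OF x that] .
  show "svir_odd (\<phi> x)" if "svir_odd x" unfolding eqI[OF x] using preserves_odd[OF x that] .
qed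

section \<open>Extreme components under iterated brackets\<close>

lemma sbracket_extreme_L_coeff:
  fixes s K M :: real
  assumes fx: "finite (supp x)" and fy: "finite (supp y)" and xG: "\<forall>r. x (G r) = 0"
    and s: "s \<noteq> 0"
    and xK: "\<forall>a. s * K < s * a \<longrightarrow> x (L a) = 0" and yM: "\<forall>b. s * M < s * b \<longrightarrow> y (L b) = 0"
  shows "sbracket x y (L (K + M)) = x (L K) * y (L M) * of_real (K - M)"
    and "s * (K + M) < s * n \<Longrightarrow> sbracket x y (L n) = 0"
proof -
  have term_nonzero: "\<exists>a b. u = L a \<and> v = L b \<and> n = a + b \<and> s * a \<le> s * K \<and> s * b \<le> s * M"
    if nz: "x u * y v * bb u v (L n) \<noteq> 0" for u v n
  proof -
    have "\<forall>r. u \<noteq> G r" using nz xG by auto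
    then obtain a b where ab: "u = L a" "v = L b" "n = a + b"
      using bb_L_coeff_nonzero nz by (metis mult_zero_right)
    moreover have "s * a \<le> s * K" using nz ab xK by (metis mult_zero_left not_less)
    moreover have "s * b \<le> s * M" using nz ab yM by (metis mult_zero_left mult_zero_right not_less)
    ultimately show ?thesis by blast
  qed
  have "sbracket x y (L (K + M)) = x (L K) * y (L M) * bb (L K) (L M) (L (K + M))"
  proof (rule sbracket_eq_single_term[OF fx fy])
    fix u v assume uv: "(u, v) \<noteq> (L K, L M)"
    show "x u * y v * bb u v (L (K + M)) = 0"
    proof (rule ccontr)
      assume "x u * y v * bb u v (L (K + M)) \<noteq> 0"
      then obtain a b where "u = L a" "v = L b" "K + M = a + b" "s * a \<le> s * K" "s * b \<le> s * M"
        using term_nonzero by blast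
      moreover from this have "s * a = s * K" "s * b = s * M"
        by (smt (verit) distrib_left)+
      ultimately show False using uv s by simp
    qed
  qed
  then show "sbracket x y (L (K + M)) = x (L K) * y (L M) * of_real (K - M)" by simp
  show "sbracket x y (L n) = 0" if "s * (K + M) < s * n"
  proof (rule sbracket_eq_zero, rule ccontr)
    fix u v assume "x u * y v * bb u v (L n) \<noteq> 0"
    then obtain a b where "n = a + b" "s * a \<le> s * K" "s * b \<le> s * M"
      using term_nonzero by blast
    then show False using that by (simp add: distrib_left)
  qed
qed

text \<open>Each bracket with \<open>w\<close> multiplies the extreme coefficient by \<open>K - (j + 2) K \<noteq> 0\<close>, so the
  weight \<open>(j + 2) K\<close> is never lost.\<close>
lemma ad_power_extreme_L_coeff:
  fixes s K :: real
  assumes fw: "finite (supp w)" and wG: "\<forall>r. w (G r) = 0" and s: "s \<noteq> 0" and K: "K \<noteq> 0"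
    and wK: "w (L K) \<noteq> 0" and wa: "\<forall>a. s * K < s * a \<longrightarrow> w (L a) = 0"
  shows "finite (supp ((sbracket w ^^ j) (bvec (L (2 * K)))))
    \<and> (sbracket w ^^ j) (bvec (L (2 * K))) (L ((real j + 2) * K)) \<noteq> 0
    \<and> (\<forall>n. s * ((real j + 2) * K) < s * n \<longrightarrow> (sbracket w ^^ j) (bvec (L (2 * K))) (L n) = 0)"
proof (induction j)
  case 0
  have "finite (supp (bvec (L (2 * K))))" by simp
  then show ?case by (auto simp: bvec_def)
next
  case (Suc j)
  define v where "v = (sbracket w ^^ j) (bvec (L (2 * K)))"
  define M where "M = (real j + 2) * K"
  have fv: "finite (supp v)" and vM: "v (L M) \<noteq> 0" and vz: "\<forall>b. s * M < s * b \<longrightarrow> v (L b) = 0"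
    using Suc unfolding v_def M_def by blast+
  have idx: "(real (Suc j) + 2) * K = K + M" by (simp add: M_def algebra_simps)
  have "K - M = - ((real j + 1) * K)" by (simp add: M_def algebra_simps)
  moreover have "(real j + 1) * K \<noteq> 0" using K by (simp add: add_pos_nonneg)
  ultimately have "of_real (K - M) \<noteq> (0::complex)" by (simp only: of_real_eq_0_iff)
  then have "sbracket w v (L (K + M)) \<noteq> 0"
    using sbracket_extreme_L_coeff(1)[OF fw fv wG s wa vz] wK vM by simp
  moreover have "\<forall>n. s * (K + M) < s * n \<longrightarrow> sbracket w v (L n) = 0"
    using sbracket_extreme_L_coeff(2)[OF fw fv wG s wa vz] by blast
  moreover have "(sbracket w ^^ Suc j) (bvec (L (2 * K))) = sbracket w v" by (simp add: v_def)
  ultimately show ?case unfolding idx using finite_supp_sbracket[OF fw fv] by simp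
qed

lemma infinite_ad_orbit_supp:
  fixes s K :: real
  assumes "finite (supp w)" "\<forall>r. w (G r) = 0" "s \<noteq> 0" "K \<noteq> 0"
    "w (L K) \<noteq> 0" "\<forall>a. s * K < s * a \<longrightarrow> w (L a) = 0"
  shows "infinite (\<Union>j. supp ((sbracket w ^^ j) (bvec (L (2 * K)))))"
proof
  assume fin: "finite (\<Union>j. supp ((sbracket w ^^ j) (bvec (L (2 * K)))))"
  have "range (\<lambda>j::nat. L ((real j + 2) * K)) \<subseteq> (\<Union>j. supp ((sbracket w ^^ j) (bvec (L (2 * K)))))"
    using ad_power_extreme_L_coeff[OF assms] by (auto simp: supp_def)
  then have "finite (range (\<lambda>j::nat. L ((real j + 2) * K)))" using fin finite_subset by blast
  moreover have "inj (\<lambda>j::nat. L ((real j + 2) * K))" using assms(4) by (auto simp: inj_def)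
  ultimately show False using finite_imageD by auto
qed

section \<open>The image of \<open>L\<^sub>0\<close>\<close>

lemma Ints_mult_eq_1:
  fixes m n :: real
  assumes "m \<in> \<int>" "n \<in> \<int>" "m * n = 1"
  shows "m = 1 \<or> m = -1"
proof -
  obtain i j where "m = of_int i" "n = of_int j" using assms(1,2) by (metis Ints_cases)
  with assms(3) have "i * j = 1" by (metis of_int_1 of_int_eq_iff of_int_mult)
  with \<open>m = of_int i\<close> show ?thesis by (auto simp: zmult_eq_1_iff)
qed

lemma svir_even_bvec_L: "svir_even (bvec (L m))"
  and svir_odd_bvec_G: "svir_odd (bvec (G r))"
  by (auto simp: bvec_def svir_even_def svir_odd_def)

context svir_automorphism
begin

text \<open>\<open>ad L\<^sub>0\<close> acts diagonally with finitely many eigenvalues on any element, hence so does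
  \<open>ad \<sigma>(L\<^sub>0)\<close>: its iterates on an element stay inside a finite set of basis elements.\<close>
lemma finite_ad_orbit_supp:
  assumes z: "z \<in> svir_carrier eps"
  shows "finite (\<Union>j. supp ((sbracket (\<sigma> (bvec (L 0))) ^^ j) z))"
proof -
  obtain z' where z': "z' \<in> svir_carrier eps" "\<sigma> z' = z" using surj_on_carrier[OF z] .
  have fz: "finite (supp z')" and adm: "\<forall>b\<in>supp z'. admissible eps b"
    using z' by (simp_all add: svir_carrier_iff)
  define u where "u j = (\<lambda>w. (- of_real (weight w)) ^ j * z' w)" for j
  have su: "supp (u j) \<subseteq> supp z'" for j by (auto simp: u_def supp_def)
  have uc: "u j \<in> svir_carrier eps" for j using carrier_subset[OF z'(1) su] .
  have iter: "(sbracket (\<sigma> (bvec (L 0))) ^^ j) z = \<sigma> (u j)" for j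
  proof (induction j)
    case 0
    then show ?case using z' by (simp add: u_def)
  next
    case (Suc j)
    have "(sbracket (\<sigma> (bvec (L 0))) ^^ Suc j) z = \<sigma> (sbracket (bvec (L 0)) (u j))"
      using Suc map_bracket[OF _ uc] by simp
    also have "sbracket (bvec (L 0)) (u j) = u (Suc j)"
      using sbracket_L0[OF finite_subset[OF su fz]] by (simp add: u_def mult.assoc)
    finally show ?case .
  qed
  have "(\<Union>j. supp ((sbracket (\<sigma> (bvec (L 0))) ^^ j) z)) \<subseteq> (\<Union>b\<in>supp z'. supp (\<sigma> (bvec b)))"
    unfolding iter using supp_map_subset[OF uc fz su adm] by blast
  moreover have "finite (\<Union>b\<in>supp z'. supp (\<sigma> (bvec b)))"
  proof (rule finite_UN_I[OF fz])
    fix b assume "b \<in> supp z'"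
    then show "finite (supp (\<sigma> (bvec b)))" using adm by (auto intro!: carrier_finite_supp[OF maps_carrier])
  qed
  ultimately show ?thesis using finite_subset by blast
qed

lemma map_L0_no_nonzero_weight:
  assumes "k \<noteq> 0"
  shows "\<sigma> (bvec (L 0)) (L k) = 0"
proof (rule ccontr)
  define w where "w = \<sigma> (bvec (L 0))"
  define S where "S = {k. k \<noteq> 0 \<and> w (L k) \<noteq> 0}"
  assume "\<sigma> (bvec (L 0)) (L k) \<noteq> 0"
  then have "k \<in> S" using assms by (simp add: S_def w_def)
  have wc: "w \<in> svir_carrier eps" by (simp add: w_def maps_carrier)
  have fw: "finite (supp w)" using carrier_finite_supp[OF wc] .
  have wG: "\<forall>r. w (G r) = 0"
    using preserves_even[OF _ svir_even_bvec_L] by (simp add: w_def svir_even_def)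
  have "S \<subseteq> L -` supp w" by (auto simp: S_def supp_def)
  then have fS: "finite S" using finite_vimageI[OF fw] by (meson finite_subset inj_onI sbasis.inject(1))
  obtain K where KS: "K \<in> S" and Kmax: "\<forall>a\<in>S. \<bar>a\<bar> \<le> \<bar>K\<bar>"
    using Max_in[of "abs ` S"] Max_ge[of "abs ` S"] fS \<open>k \<in> S\<close> by (metis empty_iff finite_imageI imageE image_eqI)
  then have K: "K \<noteq> 0" and wK: "w (L K) \<noteq> 0" by (auto simp: S_def)
  define s where "s = sgn K"
  have s: "s \<noteq> 0" using K by (simp add: s_def sgn_0_0)
  \<comment> \<open>\<open>K\<close> is extreme in the direction \<open>s\<close> because its absolute value is maximal.\<close>
  have wa: "\<forall>a. s * K < s * a \<longrightarrow> w (L a) = 0"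
  proof (intro allI impI)
    fix a assume less: "s * K < s * a"
    have "s * K = \<bar>K\<bar>" by (simp add: s_def abs_sgn mult.commute)
    moreover have "s * a \<le> \<bar>a\<bar>" using K by (simp add: s_def abs_mult abs_le_D1[of "sgn K * a"])
    ultimately have "\<bar>K\<bar> < \<bar>a\<bar>" "a \<noteq> 0" using less K by auto
    then show "w (L a) = 0" using Kmax by (auto simp: S_def)
  qed
  have "K \<in> \<int>" using carrier_admissible[OF wc wK] by simp
  then have "bvec (L (2 * K)) \<in> svir_carrier eps" by simp
  then show False
    using finite_ad_orbit_supp infinite_ad_orbit_supp[OF fw wG s K wK wa] by (simp add: w_def)
qed

lemma map_L0_eq:
  "\<sigma> (bvec (L 0)) = (\<lambda>b. \<sigma> (bvec (L 0)) (L 0) * bvec (L 0) b + \<sigma> (bvec (L 0)) C * bvec C b)"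
proof
  fix b
  have "svir_even (\<sigma> (bvec (L 0)))" using preserves_even[OF _ svir_even_bvec_L] by simp
  then show "\<sigma> (bvec (L 0)) b = \<sigma> (bvec (L 0)) (L 0) * bvec (L 0) b + \<sigma> (bvec (L 0)) C * bvec C b"
    using map_L0_no_nonzero_weight by (cases b) (auto simp: bvec_def svir_even_def)
qed

lemma map_weight_relation:
  assumes L0: "\<sigma> (bvec (L 0)) = (\<lambda>b. \<alpha> * bvec (L 0) b + \<beta> * bvec C b)"
    and b0: "admissible eps b0" and nz: "\<sigma> (bvec b0) b \<noteq> 0"
  shows "\<alpha> * of_real (weight b) = of_real (weight b0)"
proof -
  have c0: "bvec (L 0) \<in> svir_carrier eps" and cb: "bvec b0 \<in> svir_carrier eps" using b0 by simp_all
  have "sbracket (bvec (L 0)) (bvec b0) = (\<lambda>w. - of_real (weight w) * bvec b0 w)"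
    by (rule sbracket_L0) simp
  also have "\<dots> = (\<lambda>w. - of_real (weight b0) * bvec b0 w)" by (auto simp: bvec_def)
  finally have "sbracket (bvec (L 0)) (bvec b0) = (\<lambda>w. - of_real (weight b0) * bvec b0 w)" .
  then have "sbracket (\<sigma> (bvec (L 0))) (\<sigma> (bvec b0)) = (\<lambda>w. - of_real (weight b0) * \<sigma> (bvec b0) w)"
    using map_bracket[OF c0 cb] map_smult[OF cb] by metis
  moreover have "sbracket (\<sigma> (bvec (L 0))) (\<sigma> (bvec b0)) = (\<lambda>w. - \<alpha> * of_real (weight w) * \<sigma> (bvec b0) w)"
    unfolding L0 by (rule sbracket_L0_C[OF carrier_finite_supp[OF maps_carrier[OF cb]]])
  ultimately have "- \<alpha> * of_real (weight b) * \<sigma> (bvec b0) b = - of_real (weight b0) * \<sigma> (bvec b0) b"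
    by metis
  then show ?thesis using nz by simp
qed

lemma map_preimage_weight_relation:
  assumes L0: "\<sigma> (bvec (L 0)) = (\<lambda>b. \<alpha> * bvec (L 0) b + \<beta> * bvec C b)"
    and z: "z \<in> svir_carrier eps" "\<sigma> z = bvec a" and nz: "z b \<noteq> 0"
  shows "of_real (weight b) = \<alpha> * of_real (weight a)"
proof -
  have c0: "bvec (L 0) \<in> svir_carrier eps" by simp
  have ad: "sbracket (bvec (L 0)) z = (\<lambda>b. - of_real (weight b) * z b)"
    using sbracket_L0[OF carrier_finite_supp[OF z(1)]] .
  have adc: "(\<lambda>b. - of_real (weight b) * z b) \<in> svir_carrier eps"
    using z(1) by (rule carrier_subset) (auto simp: supp_def)
  have "\<sigma> (\<lambda>b. - of_real (weight b) * z b) = sbracket (\<sigma> (bvec (L 0))) (bvec a)"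
    using map_bracket[OF c0 z(1)] z(2) unfolding ad by simp
  also have "\<dots> = (\<lambda>b. - \<alpha> * of_real (weight b) * bvec a b)"
    unfolding L0 by (rule sbracket_L0_C) simp
  also have "\<dots> = (\<lambda>b. - (\<alpha> * of_real (weight a)) * \<sigma> z b)"
    using z(2) by (auto simp: bvec_def)
  also have "\<dots> = \<sigma> (\<lambda>b. - (\<alpha> * of_real (weight a)) * z b)"
    using map_smult[OF z(1), of "- (\<alpha> * of_real (weight a))"] by simp
  finally have "(\<lambda>b. - of_real (weight b) * z b) = (\<lambda>b. - (\<alpha> * of_real (weight a)) * z b)"
    using inj_on_carrier[OF adc smult_in_carrier[OF z(1)]] by blast
  then show ?thesis using fun_cong[of _ _ b] nz by fastforce
qed

lemma map_L0_coeff_unit: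
  obtains m :: real where "m = 1 \<or> m = -1" "\<sigma> (bvec (L 0)) (L 0) = of_real m"
proof -
  \<comment> \<open>\<open>1/\<alpha>\<close> is a weight occurring in \<open>\<sigma>(L\<^sub>1)\<close> and \<open>\<alpha>\<close> one occurring in \<open>\<sigma>\<^sup>-\<^sup>1(L\<^sub>1)\<close>; both are
    integers.\<close>
  define \<alpha> where "\<alpha> = \<sigma> (bvec (L 0)) (L 0)"
  define \<beta> where "\<beta> = \<sigma> (bvec (L 0)) C"
  have L0: "\<sigma> (bvec (L 0)) = (\<lambda>b. \<alpha> * bvec (L 0) b + \<beta> * bvec C b)"
    using map_L0_eq unfolding \<alpha>_def \<beta>_def .
  have c1: "bvec (L 1) \<in> svir_carrier eps" by simp
  have bvec_nonzero: "bvec a \<noteq> (\<lambda>w. 0)" for a by (auto simp: bvec_def fun_eq_iff)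
  obtain n where n: "n \<in> \<int>" "\<alpha> * of_real n = 1"
  proof -
    have "\<sigma> (bvec (L 1)) \<noteq> (\<lambda>w. 0)" using map_eq_zero_iff[OF c1] bvec_nonzero[of "L 1"] by simp
    then obtain b where b: "\<sigma> (bvec (L 1)) b \<noteq> 0" by (metis ext)
    have wb: "\<alpha> * of_real (weight b) = 1" using map_weight_relation[OF L0 _ b] by simp
    have "svir_even (\<sigma> (bvec (L 1)))" using preserves_even[OF c1 svir_even_bvec_L] .
    then obtain k where "b = L k" using b wb by (cases b) (auto simp: svir_even_def)
    moreover have "k \<in> \<int>" using carrier_admissible[OF maps_carrier[OF c1] b] \<open>b = L k\<close> by simp
    ultimately show thesis using that wb by simp
  qed
  obtain m where m: "m \<in> \<int>" "\<alpha> = of_real m"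
  proof -
    obtain z where z: "z \<in> svir_carrier eps" "\<sigma> z = bvec (L 1)" using surj_on_carrier[OF c1] .
    have "z \<noteq> (\<lambda>w. 0)" using z(2) map_zero bvec_nonzero[of "L 1"] by metis
    then obtain b where b: "z b \<noteq> 0" by (metis ext)
    have wb: "\<alpha> = of_real (weight b)" using map_preimage_weight_relation[OF L0 z b] by simp
    have "svir_even z" using reflects_even[OF z(1)] z(2) svir_even_bvec_L by simp
    then obtain k where "b = L k" using b wb n(2) by (cases b) (auto simp: svir_even_def)
    moreover have "k \<in> \<int>" using carrier_admissible[OF z(1) b] \<open>b = L k\<close> by simp
    ultimately show thesis using that wb by simp
  qed
  have "m * n = 1" using n(2) m(2) by (metis of_real_1 of_real_eq_iff of_real_mult)
  then show thesis using that Ints_mult_eq_1[OF m(1) n(1)] m(2) by (simp add: \<alpha>_def)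
qed

context
  fixes m :: real and \<beta> :: complex
  assumes sign: "m = 1 \<or> m = -1"
    and L0: "\<sigma> (bvec (L 0)) = (\<lambda>b. of_real m * bvec (L 0) b + \<beta> * bvec C b)"
begin

lemma map_bvec_L_eq:
  assumes "k \<in> \<int>" "k \<noteq> 0"
  shows "\<sigma> (bvec (L k)) = (\<lambda>b. \<sigma> (bvec (L k)) (L (m * k)) * bvec (L (m * k)) b)"
proof (rule fun_eq_scaled_bvec)
  fix b assume nz: "\<sigma> (bvec (L k)) b \<noteq> 0"
  have "of_real m * of_real (weight b) = (of_real k :: complex)"
    using map_weight_relation[OF L0 _ nz] assms(1) by simp
  then have mw: "m * weight b = k" by (metis of_real_eq_iff of_real_mult)
  have ev: "svir_even (\<sigma> (bvec (L k)))" using preserves_even[OF _ svir_even_bvec_L] assms(1) by simp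
  show "b = L (m * k)"
  proof (cases b)
    case (L j)
    then show ?thesis using mw sign by auto
  next
    case C
    then show ?thesis using mw assms(2) by simp
  qed (use nz ev in \<open>simp add: svir_even_def\<close>)
qed

lemma map_bvec_G_eq:
  assumes "admissible eps (G r)"
  shows "\<sigma> (bvec (G r)) = (\<lambda>b. \<sigma> (bvec (G r)) (G (m * r)) * bvec (G (m * r)) b)"
proof (rule fun_eq_scaled_bvec)
  fix b assume nz: "\<sigma> (bvec (G r)) b \<noteq> 0"
  have "of_real m * of_real (weight b) = (of_real r :: complex)"
    using map_weight_relation[OF L0 assms nz] by simp
  then have mw: "m * weight b = r" by (metis of_real_eq_iff of_real_mult)
  have od: "svir_odd (\<sigma> (bvec (G r)))" using preserves_odd[OF _ svir_odd_bvec_G] assms by simp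
  show "b = G (m * r)"
  proof (cases b)
    case (G s)
    then show ?thesis using mw sign by auto
  qed (use nz od in \<open>simp_all add: svir_odd_def\<close>)
qed

text \<open>\<open>[\<sigma>(L\<^sub>1), \<sigma>(L\<^sub>-\<^sub>1)] = 2\<sigma>(L\<^sub>0)\<close> is a multiple of \<open>[L\<^sub>m, L\<^sub>-\<^sub>m]\<close>,
  whose central term \<open>(m\<^sup>3 - m)/12\<close> vanishes for \<open>m = \<plusminus>1\<close>.\<close>
lemma map_L0_central_coeff: "\<beta> = 0"
proof -
  have c1: "bvec (L 1) \<in> svir_carrier eps" and cm1: "bvec (L (-1)) \<in> svir_carrier eps"
    and c0: "bvec (L 0) \<in> svir_carrier eps" by simp_all
  have "sbracket (\<sigma> (bvec (L 1))) (\<sigma> (bvec (L (-1)))) = \<sigma> (bb (L 1) (L (-1)))"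
    using map_bracket[OF c1 cm1] sbracket_bvec by simp
  also have "bb (L 1) (L (-1)) = (\<lambda>b. 2 * bvec (L 0) b)" by (auto simp: bvec_def)
  also have "\<sigma> (\<lambda>b. 2 * bvec (L 0) b) = (\<lambda>b. 2 * \<sigma> (bvec (L 0)) b)" by (rule map_smult[OF c0])
  finally have "sbracket (\<sigma> (bvec (L 1))) (\<sigma> (bvec (L (-1)))) C = 2 * \<sigma> (bvec (L 0)) C"
    by simp
  moreover have "\<sigma> (bvec (L 0)) C = \<beta>" unfolding L0 by (simp add: bvec_def)
  moreover obtain c c' where "\<sigma> (bvec (L 1)) = (\<lambda>b. c * bvec (L m) b)"
    and "\<sigma> (bvec (L (-1))) = (\<lambda>b. c' * bvec (L (- m)) b)"
    using map_bvec_L_eq[of 1] map_bvec_L_eq[of "-1"] by simp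
  then have "sbracket (\<sigma> (bvec (L 1))) (\<sigma> (bvec (L (-1)))) C = c * c' * bb (L m) (L (- m)) C"
    by (simp only: sbracket_scaled_bvec)
  moreover have "bb (L m) (L (- m)) C = 0" using sign by auto
  ultimately show ?thesis by simp
qed

end

lemma map_L0_sign:
  obtains m :: real where "m = 1 \<or> m = -1" "\<sigma> (bvec (L 0)) = (\<lambda>b. of_real m * bvec (L 0) b)"
proof -
  obtain m :: real where m: "m = 1 \<or> m = -1" "\<sigma> (bvec (L 0)) (L 0) = of_real m"
    using map_L0_coeff_unit .
  then have L0: "\<sigma> (bvec (L 0)) = (\<lambda>b. of_real m * bvec (L 0) b + \<sigma> (bvec (L 0)) C * bvec C b)"
    using map_L0_eq by simp
  show thesis using that m(1) L0 map_L0_central_coeff[OF m(1) L0] by simp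
qed

end

section \<open>Automorphisms fixing \<open>L\<^sub>1 + L\<^sub>2 + G\<^sub>\<epsilon>\<close>\<close>

lemma multiplicative_eq_1:
  fixes c :: "int \<Rightarrow> 'a::comm_monoid_mult"
  assumes c1: "c 1 = 1" and c2: "c 2 = 1"
    and mult: "\<And>a b. a \<noteq> b \<Longrightarrow> a + b \<noteq> 0 \<Longrightarrow> c (a + b) = c a * c b"
    and k: "k \<noteq> 0"
  shows "c k = 1"
proof (cases "k > 0")
  case True
  then have "1 \<le> k" by simp
  then show ?thesis
  proof (induction k rule: int_ge_induct)
    case (step i)
    then show ?case using mult[of i 1] c1 c2 by (cases "i = 1") simp_all
  qed (rule c1)
next
  case False
  then have "k \<le> -1" using k by simp
  then show ?thesis
  proof (induction k rule: int_le_induct)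
    case base
    show ?case using mult[of "-1" 2] c1 c2 by simp
  next
    case (step i)
    then show ?case using mult[of "i - 1" 1] c1 by simp
  qed
qed

context svir_automorphism
begin

context
  assumes fixes_L0: "\<sigma> (bvec (L 0)) = bvec (L 0)"
begin

lemma map_L0_eq_1: "\<sigma> (bvec (L 0)) = (\<lambda>b. of_real 1 * bvec (L 0) b + 0 * bvec C b)"
  using fixes_L0 by simp

lemma map_bvec_L_diag:
  assumes "k \<in> \<int>"
  obtains c where "\<sigma> (bvec (L k)) = (\<lambda>b. c * bvec (L k) b)"
proof (cases "k = 0")
  case True
  then show thesis using that[of 1] fixes_L0 by simp
next
  case False
  then show thesis using that map_bvec_L_eq[OF _ map_L0_eq_1 assms] by simp
qed

lemma map_bvec_G_diag:
  assumes "admissible eps (G r)"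
  obtains d where "\<sigma> (bvec (G r)) = (\<lambda>b. d * bvec (G r) b)"
  using that map_bvec_G_eq[OF _ map_L0_eq_1 assms] by simp

lemma map_L_coeff_mult:
  assumes a: "a \<in> \<int>" and b: "b \<in> \<int>" and "a \<noteq> b" "a + b \<noteq> 0"
  shows "\<sigma> (bvec (L (a + b))) (L (a + b)) = \<sigma> (bvec (L a)) (L a) * \<sigma> (bvec (L b)) (L b)"
proof -
  obtain ca cb cab where ca: "\<sigma> (bvec (L a)) = (\<lambda>w. ca * bvec (L a) w)"
    and cb: "\<sigma> (bvec (L b)) = (\<lambda>w. cb * bvec (L b) w)"
    and cab: "\<sigma> (bvec (L (a + b))) = (\<lambda>w. cab * bvec (L (a + b)) w)"
    using map_bvec_L_diag a b Ints_add[OF a b] by metis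
  have bb_ab: "bb (L a) (L b) = (\<lambda>w. of_real (a - b) * bvec (L (a + b)) w)"
    using assms(4) by (auto simp: bvec_def)
  have "\<sigma> (bb (L a) (L b)) = (\<lambda>w. ca * cb * bb (L a) (L b) w)"
    using map_bracket[of "bvec (L a)" "bvec (L b)"] a b
    by (simp add: sbracket_bvec[symmetric] ca cb sbracket_scaled_bvec)
  moreover have "\<sigma> (bb (L a) (L b)) = (\<lambda>w. of_real (a - b) * (cab * bvec (L (a + b)) w))"
    unfolding bb_ab using map_smult[of "bvec (L (a + b))"] a b cab by (simp add: Ints_add)
  ultimately have "of_real (a - b) * cab = ca * cb * of_real (a - b)"
    using fun_cong[of _ _ "L (a + b)"] bb_ab by (fastforce simp: bvec_def)
  then show ?thesis using assms(3) unfolding ca cb cab by (simp add: bvec_def)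
qed

lemma map_G_coeff_mult:
  assumes eps: "eps = 0 \<or> eps = 1/2"
    and r: "admissible eps (G r)" and s: "admissible eps (G s)" and "r + s \<noteq> 0"
  shows "\<sigma> (bvec (G r)) (G r) * \<sigma> (bvec (G s)) (G s) = \<sigma> (bvec (L (r + s))) (L (r + s))"
proof -
  have rs: "r + s \<in> \<int>" using Ints_sum_of_admissible_G[OF eps] r s by simp
  obtain dr ds c where dr: "\<sigma> (bvec (G r)) = (\<lambda>w. dr * bvec (G r) w)"
    and ds: "\<sigma> (bvec (G s)) = (\<lambda>w. ds * bvec (G s) w)"
    and c: "\<sigma> (bvec (L (r + s))) = (\<lambda>w. c * bvec (L (r + s)) w)"
    using map_bvec_G_diag r s map_bvec_L_diag[OF rs] by metis
  have bb_rs: "bb (G r) (G s) = (\<lambda>w. 2 * bvec (L (r + s)) w)"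
    using assms(4) by (auto simp: bvec_def)
  have "\<sigma> (bb (G r) (G s)) = (\<lambda>w. dr * ds * bb (G r) (G s) w)"
    using map_bracket[of "bvec (G r)" "bvec (G s)"] r s
    by (simp add: sbracket_bvec[symmetric] dr ds sbracket_scaled_bvec)
  moreover have "\<sigma> (bb (G r) (G s)) = (\<lambda>w. 2 * (c * bvec (L (r + s)) w))"
    unfolding bb_rs using map_smult[of "bvec (L (r + s))"] rs c by simp
  ultimately have "2 * c = dr * ds * 2"
    using fun_cong[of _ _ "L (r + s)"] bb_rs by (fastforce simp: bvec_def)
  then show ?thesis unfolding dr ds c by (simp add: bvec_def)
qed

end

end

definition rigid_elem :: "real \<Rightarrow> svir" where
  "rigid_elem eps = (\<lambda>b. bvec (L 1) b + bvec (L 2) b + bvec (G eps) b)"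

lemma rigid_elem_in_carrier: "rigid_elem eps \<in> svir_carrier eps"
  unfolding rigid_elem_def by (intro add_in_carrier) simp_all

context svir_automorphism
begin

context
  assumes eps_cases: "eps = 0 \<or> eps = 1/2"
    and fixes_rigid: "\<sigma> (rigid_elem eps) = rigid_elem eps"
begin

lemma map_rigid_elem:
  "\<sigma> (rigid_elem eps) = (\<lambda>b. \<sigma> (bvec (L 1)) b + \<sigma> (bvec (L 2)) b + \<sigma> (bvec (G eps)) b)"
  unfolding rigid_elem_def
  using map_add[of "\<lambda>b. bvec (L 1) b + bvec (L 2) b" "bvec (G eps)"] map_add[of "bvec (L 1)" "bvec (L 2)"]
  by (simp add: add_in_carrier)

text \<open>If \<open>\<sigma>(L\<^sub>0) = -L\<^sub>0\<close>, then \<open>\<sigma>\<close> reverses all weights and \<open>\<sigma>(L\<^sub>1 + L\<^sub>2 + G\<^sub>\<epsilon>)\<close> has no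
  \<open>L\<^sub>1\<close>-component.\<close>
lemma rigid_fixes_L0: "\<sigma> (bvec (L 0)) = bvec (L 0)"
proof -
  obtain m :: real where m: "m = 1 \<or> m = -1" and L0: "\<sigma> (bvec (L 0)) = (\<lambda>b. of_real m * bvec (L 0) b)"
    using map_L0_sign .
  have L0': "\<sigma> (bvec (L 0)) = (\<lambda>b. of_real m * bvec (L 0) b + 0 * bvec C b)" using L0 by simp
  have "m = 1"
  proof (rule ccontr)
    assume "m \<noteq> 1"
    then have "m = -1" using m by simp
    have "\<sigma> (bvec (L 1)) (L 1) = 0" "\<sigma> (bvec (L 2)) (L 1) = 0"
      using fun_cong[OF map_bvec_L_eq[OF m L0', of 1], of "L 1"]
        fun_cong[OF map_bvec_L_eq[OF m L0', of 2], of "L 1"] \<open>m = -1\<close>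
      by (simp_all add: bvec_def)
    moreover have "\<sigma> (bvec (G eps)) (L 1) = 0"
      using fun_cong[OF map_bvec_G_eq[OF m L0', of eps], of "L 1"] by (simp add: bvec_def)
    ultimately have "\<sigma> (rigid_elem eps) (L 1) = 0" by (simp add: map_rigid_elem)
    then show False using fixes_rigid by (simp add: rigid_elem_def bvec_def)
  qed
  then show ?thesis using L0 by simp
qed

lemma rigid_coeffs:
  "\<sigma> (bvec (L 1)) (L 1) = 1" "\<sigma> (bvec (L 2)) (L 2) = 1" "\<sigma> (bvec (G eps)) (G eps) = 1"
proof -
  obtain c1 c2 d where c1: "\<sigma> (bvec (L 1)) = (\<lambda>w. c1 * bvec (L 1) w)"
    and c2: "\<sigma> (bvec (L 2)) = (\<lambda>w. c2 * bvec (L 2) w)"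
    and d: "\<sigma> (bvec (G eps)) = (\<lambda>w. d * bvec (G eps) w)"
    using map_bvec_L_diag[OF rigid_fixes_L0] map_bvec_G_diag[OF rigid_fixes_L0]
    by (metis Ints_1 admissible_simps(2) cancel_comm_monoid_add_class.diff_cancel Ints_0 Ints_numeral)
  have "(\<lambda>w. c1 * bvec (L 1) w + c2 * bvec (L 2) w + d * bvec (G eps) w) = rigid_elem eps"
    using fixes_rigid map_rigid_elem c1 c2 d by simp
  from fun_cong[OF this, of "L 1"] fun_cong[OF this, of "L 2"] fun_cong[OF this, of "G eps"]
  show "\<sigma> (bvec (L 1)) (L 1) = 1" "\<sigma> (bvec (L 2)) (L 2) = 1" "\<sigma> (bvec (G eps)) (G eps) = 1"
    unfolding c1 c2 d by (simp_all add: rigid_elem_def bvec_def)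
qed

lemma rigid_fixes_L:
  assumes "k \<in> \<int>"
  shows "\<sigma> (bvec (L k)) = bvec (L k)"
proof -
  define c where "c i = \<sigma> (bvec (L (of_int i))) (L (of_int i))" for i :: int
  obtain i where i: "k = of_int i" using assms by (rule Ints_cases)
  have "c i = 1" if "i \<noteq> 0"
  proof (rule multiplicative_eq_1[OF _ _ _ that])
    show "c 1 = 1" "c 2 = 1" using rigid_coeffs by (simp_all add: c_def)
    show "c (a + b) = c a * c b" if "a \<noteq> b" "a + b \<noteq> 0" for a b
      using map_L_coeff_mult[OF rigid_fixes_L0, of "of_int a" "of_int b"] that by (simp add: c_def)
  qed
  moreover obtain ck where "\<sigma> (bvec (L k)) = (\<lambda>w. ck * bvec (L k) w)"
    using map_bvec_L_diag[OF rigid_fixes_L0 assms] .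
  ultimately show ?thesis using rigid_fixes_L0 i by (cases "i = 0") (auto simp: c_def bvec_def)
qed

lemma rigid_fixes_G:
  assumes r: "admissible eps (G r)"
  shows "\<sigma> (bvec (G r)) = bvec (G r)"
proof -
  define d where "d s = \<sigma> (bvec (G s)) (G s)" for s
  have d_mult: "d s * d s' = 1" if "admissible eps (G s)" "admissible eps (G s')" "s + s' \<noteq> 0" for s s'
    using map_G_coeff_mult[OF rigid_fixes_L0 eps_cases that] rigid_fixes_L[of "s + s'"]
      Ints_sum_of_admissible_G[OF eps_cases] that by (simp add: d_def bvec_def)
  have d_eps: "d eps = 1" using rigid_coeffs(3) by (simp add: d_def)
  have "d r = 1"
  proof (cases "r = - eps")
    case False
    then show ?thesis using d_mult[OF r, of eps] d_eps by simp
  next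
    case True
    have "d (eps + 1) = 1" using d_mult[of "eps + 1" eps] d_eps eps_cases by auto
    then show ?thesis using d_mult[OF r, of "eps + 1"] True by simp
  qed
  moreover obtain dr where "\<sigma> (bvec (G r)) = (\<lambda>w. dr * bvec (G r) w)"
    using map_bvec_G_diag[OF rigid_fixes_L0 r] .
  ultimately show ?thesis by (auto simp: d_def bvec_def)
qed

lemma rigid_fixes_C: "\<sigma> (bvec C) = bvec C"
proof -
  have c2: "bvec (L 2) \<in> svir_carrier eps" and cm2: "bvec (L (-2)) \<in> svir_carrier eps"
    and c0: "bvec (L 0) \<in> svir_carrier eps" and cC: "bvec C \<in> svir_carrier eps" by simp_all
  have bb_2: "bb (L 2) (L (-2)) = (\<lambda>w. 4 * bvec (L 0) w + (1/2) * bvec C w)"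
    by (auto simp: bvec_def)
  have "bb (L 2) (L (-2)) = \<sigma> (bb (L 2) (L (-2)))"
    using map_bracket[OF c2 cm2] rigid_fixes_L[of 2] rigid_fixes_L[of "-2"] by (simp add: sbracket_bvec)
  also have "\<dots> = (\<lambda>w. \<sigma> (\<lambda>w. 4 * bvec (L 0) w) w + \<sigma> (\<lambda>w. (1/2) * bvec C w) w)"
    unfolding bb_2 by (rule map_add[OF smult_in_carrier[OF c0] smult_in_carrier[OF cC]])
  also have "\<dots> = (\<lambda>w. 4 * bvec (L 0) w + (1/2) * \<sigma> (bvec C) w)"
    by (simp only: map_smult[OF c0] map_smult[OF cC] rigid_fixes_L0)
  finally show ?thesis unfolding bb_2 by (auto simp: fun_eq_iff)
qed

lemma rigid_stabilizer_trivial: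
  assumes z: "z \<in> svir_carrier eps"
  shows "\<sigma> z = z"
proof -
  have fz: "finite (supp z)" and adm: "\<forall>b\<in>supp z. admissible eps b"
    using z by (simp_all add: svir_carrier_iff)
  have fixes_basis: "\<sigma> (bvec b) = bvec b" if "admissible eps b" for b
    using that rigid_fixes_L rigid_fixes_G rigid_fixes_C by (cases b) auto
  have "\<sigma> z = (\<lambda>w. \<Sum>b\<in>supp z. z b * \<sigma> (bvec b) w)" by (rule map_in_basis[OF z fz subset_refl adm])
  also have "\<dots> = (\<lambda>w. \<Sum>b\<in>supp z. z b * bvec b w)" using adm fixes_basis by simp
  also have "\<dots> = z" using expand_in_basis[OF fz subset_refl] by simp
  finally show ?thesis .
qed

end

end

section \<open>2-local automorphisms\<close>

lemma svir_2local_aut_is_aut: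
  assumes eps: "eps = 0 \<or> eps = 1/2" and x: "x \<in> svir_carrier eps"
    and stab: "\<And>\<sigma> z. svir_aut eps \<sigma> \<Longrightarrow> \<sigma> x = x \<Longrightarrow> z \<in> svir_carrier eps \<Longrightarrow> \<sigma> z = z"
    and \<phi>: "svir_2local_aut eps \<phi>"
  shows "svir_aut eps \<phi>"
proof -
  let ?K = "svir_carrier eps"
  obtain \<tau> where \<tau>: "svir_aut eps \<tau>" and \<tau>x: "\<phi> x = \<tau> x"
    using \<phi> x unfolding svir_2local_aut_def by blast
  interpret \<tau>: svir_automorphism eps \<tau> using \<tau> by unfold_locales
  have "\<phi> y = \<tau> y" if y: "y \<in> ?K" for y
  proof -
    obtain \<theta> where \<theta>: "svir_aut eps \<theta>" and \<theta>x: "\<phi> x = \<theta> x" and \<theta>y: "\<phi> y = \<theta> y"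
      using \<phi> x y unfolding svir_2local_aut_def by blast
    define \<sigma> where "\<sigma> = (\<lambda>z. inv_into ?K \<tau> (\<theta> z))"
    have \<sigma>: "svir_aut eps \<sigma>" unfolding \<sigma>_def by (rule svir_aut_comp[OF svir_aut_inv_into[OF eps \<tau>] \<theta>])
    have inv_\<tau>: "\<tau> (inv_into ?K \<tau> z) = z" if "z \<in> ?K" for z
      using bij_betw_inv_into_right[OF \<tau>.bij that] .
    have "\<sigma> x = x"
      using \<theta>x \<tau>x inv_into_f_f[OF bij_betw_imp_inj_on[OF \<tau>.bij] x] by (simp add: \<sigma>_def)
    then have "\<sigma> y = y" using stab[OF \<sigma> _ y] by blast
    then have "\<theta> y = \<tau> y"
      using inv_\<tau>[OF svir_automorphism.maps_carrier[OF svir_automorphism.intro[OF \<theta>] y]]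
      by (simp add: \<sigma>_def)
    then show ?thesis using \<theta>y by simp
  qed
  then show ?thesis using svir_aut_cong[OF eps \<tau>] by blast
qed

theorem theorem5p2:
  fixes eps :: real and \<phi> :: "svir \<Rightarrow> svir"
  assumes "eps = 0 \<or> eps = 1/2"
    and "svir_2local_aut eps \<phi>"
  shows "svir_aut eps \<phi>"
proof (rule svir_2local_aut_is_aut[OF assms(1) rigid_elem_in_carrier _ assms(2)])
  fix \<sigma> z assume "svir_aut eps \<sigma>" "\<sigma> (rigid_elem eps) = rigid_elem eps" "z \<in> svir_carrier eps"
  then show "\<sigma> z = z"
    using svir_automorphism.rigid_stabilizer_trivial[OF svir_automorphism.intro assms(1)] by blast
qed

end
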